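(* Let $\mathrm r\in\mathbb{Z}_+^d$ with $\mathrm r>0$, and let $x\in S_d$ have length $\mathrm n\in\mathbb{N}^d$; set $k_i=-\min_{0\le n\le n_i}x^{i,i}_n$ for $i\in[d]$ and $\mathrm k=(k_1,\dots,k_d)$. If $\mathrm n$ is the smallest solution of the system $(\mathrm r,x)$, then $\mathrm k$ is the smallest solution of the system $(\mathrm r,\bar x)$. Conversely, if $n_i=\tau^{(i)}_{k_i}$ for all $i\in[d]$ and $\mathrm k$ is the smallest solution of $(\mathrm r,\bar x)$, then $\mathrm n$ is the smallest solution of $(\mathrm r,x)$.
   Context: $d\ge2$, $[d]=\{1,\dots,d\}$, $\mathbb N=\{1,2,\dots\}$. $S_d$: families $x=(x^{(1)},\dots,x^{(d)})$, $x^{(i)}=(x^{i,1},\dots,x^{i,d})$ a $\mathbb{Z}^d$-valued sequence indexed by $\{0,\dots,n_i\}$ ($0\le n_i\le\infty$), with $x^{(i)}_0=0$, $x^{i,j}$ nondecreasing for $i\ne j$, and $x^{i,i}_{n+1}-x^{i,i}_n\ge -1$; $(n_1,\dots,n_d)$ is its length; $x^{i,j}(n):=x^{i,j}_n$. Order on vectors is coordinatewise; $\mathrm q<\mathrm q'$ means $\mathrm q\le\mathrm q'$, $\mathrm q\ne\mathrm q'$. For $x$ of length $\mathrm q$, a solution of the system $(\mathrm r,x)$ is $\mathrm s\in\mathbb{Z}_+^d$ with $\mathrm s\le\mathrm q$ and $r_j+\sum_{i=1}^dx^{i,j}(s_i)=0$ for all $j\in[d]$; the smallest solution is a solution that is $\le$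 every solution. For $x\in S_d$, with $k_i=-\inf_{0\le n\le n_i}x^{i,i}_n$, define $\tau^{(i)}_k=\min\{n\ge 0:x^{i,i}_n=-k\}$ for $0\le k\le k_i$, and $\bar x^{i,j}_k=x^{i,j}(\tau^{(i)}_k)$ for $0\le k\le k_i$, $i,j\in[d]$; $\bar x=(\bar x^{(1)},\dots,\bar x^{(d)})\in S_d$ has length $(k_1,\dots,k_d)$. *)

theory Defs
  imports Main
begin

text \<open>A family x = (x^(1),...,x^(d)) is encoded as x :: nat => nat => nat => int,
  with x i j m = x^{i,j}_m for i,j in {1..d}; its length is q :: nat => nat
  (q i = n_i, finite). Values outside the index ranges are irrelevant.\<close>

definition in_S :: "nat \<Rightarrow> (nat \<Rightarrow> nat \<Rightarrow> nat \<Rightarrow> int) \<Rightarrow> (nat \<Rightarrow> nat) \<Rightarrow> bool" where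
  "in_S d x q \<longleftrightarrow>
     (\<forall>i\<in>{1..d}.
        (\<forall>j\<in>{1..d}. x i j 0 = 0) \<and>
        (\<forall>j\<in>{1..d}. j \<noteq> i \<longrightarrow> (\<forall>m<q i. x i j m \<le> x i j (Suc m))) \<and>
        (\<forall>m<q i. x i i (Suc m) - x i i m \<ge> -1))"

definition is_solution :: "nat \<Rightarrow> (nat \<Rightarrow> nat) \<Rightarrow> (nat \<Rightarrow> nat \<Rightarrow> nat \<Rightarrow> int)
    \<Rightarrow> (nat \<Rightarrow> nat) \<Rightarrow> (nat \<Rightarrow> nat) \<Rightarrow> bool" where
  "is_solution d r x q s \<longleftrightarrow>
     (\<forall>i\<in>{1..d}. s i \<le> q i) \<and>
     (\<forall>j\<in>{1..d}. int (r j) + (\<Sum>i=1..d. x i j (s i)) = 0)"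

definition smallest_solution :: "nat \<Rightarrow> (nat \<Rightarrow> nat) \<Rightarrow> (nat \<Rightarrow> nat \<Rightarrow> nat \<Rightarrow> int)
    \<Rightarrow> (nat \<Rightarrow> nat) \<Rightarrow> (nat \<Rightarrow> nat) \<Rightarrow> bool" where
  "smallest_solution d r x q s \<longleftrightarrow>
     is_solution d r x q s \<and>
     (\<forall>s'. is_solution d r x q s' \<longrightarrow> (\<forall>i\<in>{1..d}. s i \<le> s' i))"

definition kvec :: "(nat \<Rightarrow> nat \<Rightarrow> nat \<Rightarrow> int) \<Rightarrow> (nat \<Rightarrow> nat) \<Rightarrow> nat \<Rightarrow> nat" where
  "kvec x q i = nat (- Min {x i i m | m. m \<le> q i})"

definition tau :: "(nat \<Rightarrow> nat \<Rightarrow> nat \<Rightarrow> int) \<Rightarrow> nat \<Rightarrow> nat \<Rightarrow> nat" where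
  "tau x i k = (LEAST m. x i i m = - int k)"

definition xbar :: "(nat \<Rightarrow> nat \<Rightarrow> nat \<Rightarrow> int) \<Rightarrow> nat \<Rightarrow> nat \<Rightarrow> nat \<Rightarrow> int" where
  "xbar x i j k = x i j (tau x i k)"

end

theory Submission
  imports Defs
begin

text \<open>Equation j of the system (r, x) says x^{jj}(s_j) = -level_j(s), where
  level_j(s) = r_j + \<Sum>_{i\<noteq>j} x^{ij}(s_i) is monotone in s. Below every solution s there is a
  solution t consisting of first hitting times, t_i = \<tau>^{(i)}(level_i(t)): among the u \<le> s with
  first_hit(u) \<le> u take one of least coordinate sum; the map first_hit preserves this set, so
  the minimal element is a fixed point, and fixed points are solutions. Because the diagonal
  walks x^{ii} go down by steps of at most 1, a \<mapsto> (\<tau>^{(i)}(a_i))_i turns solutions of (r, xbar x)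
  into solutions of (r, x) made of first hitting times and back, which transfers minimality in
  both directions.\<close>

lemma in_S_offdiag_mono:
  assumes "in_S d x q" "i \<in> {1..d}" "j \<in> {1..d}" "j \<noteq> i" "a \<le> b" "b \<le> q i"
  shows "x i j a \<le> x i j b"
proof -
  have steps: "\<forall>m<q i. x i j m \<le> x i j (Suc m)" using assms(1-4) by (auto simp: in_S_def)
  show ?thesis using assms(5,6) steps
    by (induction b rule: dec_induct) (auto intro: order_trans)
qed

lemma in_S_diag_attains:
  assumes "in_S d x q" "i \<in> {1..d}" "m \<le> q i" "x i i m \<le> - int a"
  shows "\<exists>m'\<le>m. x i i m' = - int a"
  using assms(3,4)
proof (induction m)
  case 0
  then show ?case using assms(1,2) by (auto simp: in_S_def)
next
  case (Suc m)
  show ?case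
  proof (cases "x i i m \<le> - int a")
    case True
    then show ?thesis using Suc by (auto intro: le_SucI)
  next
    case False
    have "x i i (Suc m) - x i i m \<ge> -1" using assms(1,2) Suc.prems by (auto simp: in_S_def)
    then have "x i i (Suc m) = - int a" using False Suc.prems by linarith
    then show ?thesis by auto
  qed
qed

lemma diag_at_tau: "x i i m = - int a \<Longrightarrow> x i i (tau x i a) = - int a"
  unfolding tau_def by (rule LeastI)

lemma tau_le:
  assumes "in_S d x q" "i \<in> {1..d}" "m \<le> q i" "x i i m \<le> - int a"
  shows "tau x i a \<le> m"
proof -
  obtain m' where "m' \<le> m" "x i i m' = - int a" using in_S_diag_attains[OF assms] by blast
  then show ?thesis unfolding tau_def by (meson Least_le order_trans)
qed

definition level ::
    "nat \<Rightarrow> (nat \<Rightarrow> nat) \<Rightarrow> (nat \<Rightarrow> nat \<Rightarrow> nat \<Rightarrow> int) \<Rightarrow> (nat \<Rightarrow> nat) \<Rightarrow> nat \<Rightarrow> int"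
  where "level d r x s j = int (r j) + (\<Sum>i\<in>{1..d}-{j}. x i j (s i))"

lemma is_solution_iff_level:
  "is_solution d r x q s \<longleftrightarrow>
     (\<forall>i\<in>{1..d}. s i \<le> q i) \<and> (\<forall>j\<in>{1..d}. x j j (s j) = - level d r x s j)"
proof -
  have "int (r j) + (\<Sum>i=1..d. x i j (s i)) = 0 \<longleftrightarrow> x j j (s j) = - level d r x s j"
    if "j \<in> {1..d}" for j
  proof -
    have "(\<Sum>i=1..d. x i j (s i)) = x j j (s j) + (\<Sum>i\<in>{1..d}-{j}. x i j (s i))"
      using that by (simp add: sum.remove)
    then show ?thesis unfolding level_def by linarith
  qed
  then show ?thesis unfolding is_solution_def by auto
qed

lemma is_solution_cong:
  "\<forall>i\<in>{1..d}. s i = s' i \<Longrightarrow> is_solution d r x q s \<longleftrightarrow> is_solution d r x q s'"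
  unfolding is_solution_def by (metis (no_types, lifting) sum.cong)

lemma level_mono:
  assumes "in_S d x q" "\<forall>i\<in>{1..d}. s i \<le> s' i" "\<forall>i\<in>{1..d}. s' i \<le> q i" "j \<in> {1..d}"
  shows "level d r x s j \<le> level d r x s' j"
  unfolding level_def
  by (intro add_left_mono sum_mono) (use assms in_S_offdiag_mono[OF assms(1)] in auto)

lemma level_nonneg:
  assumes "in_S d x q" "\<forall>i\<in>{1..d}. s i \<le> q i" "j \<in> {1..d}"
  shows "level d r x s j \<ge> 0"
proof -
  have "level d r x (\<lambda>_. 0) j \<ge> 0"
    using assms(1,3) by (auto simp: level_def in_S_def intro: sum_nonneg)
  also have "level d r x (\<lambda>_. 0) j \<le> level d r x s j"
    using level_mono[OF assms(1) _ assms(2,3)] by simp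
  finally show ?thesis .
qed

definition first_hit ::
    "nat \<Rightarrow> (nat \<Rightarrow> nat) \<Rightarrow> (nat \<Rightarrow> nat \<Rightarrow> nat \<Rightarrow> int) \<Rightarrow> (nat \<Rightarrow> nat) \<Rightarrow> nat \<Rightarrow> nat"
  where "first_hit d r x u i = tau x i (nat (level d r x u i))"

lemma first_hit_le:
  assumes "in_S d x q" "\<forall>l\<in>{1..d}. u l \<le> q l" "i \<in> {1..d}"
    and "m \<le> q i" "x i i m \<le> - level d r x u i"
  shows "first_hit d r x u i \<le> m \<and> x i i (first_hit d r x u i) = - level d r x u i"
proof -
  have nonneg: "level d r x u i \<ge> 0" using level_nonneg[OF assms(1-3)] .
  then have "x i i m \<le> - int (nat (level d r x u i))" using assms(5) by simp
  moreover obtain m' where "x i i m' = - int (nat (level d r x u i))"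
    using in_S_diag_attains[OF assms(1,3,4) calculation] by blast
  ultimately show ?thesis
    using tau_le[OF assms(1,3,4)] diag_at_tau[of x i m'] nonneg unfolding first_hit_def by simp
qed

lemma first_hit_below_solution:
  assumes "in_S d x q" "is_solution d r x q s" "\<forall>l\<in>{1..d}. u l \<le> s l" "i \<in> {1..d}"
  shows "first_hit d r x u i \<le> s i \<and> x i i (first_hit d r x u i) = - level d r x u i"
proof -
  have sq: "\<forall>l\<in>{1..d}. s l \<le> q l" using assms(2) by (simp add: is_solution_def)
  then have uq: "\<forall>l\<in>{1..d}. u l \<le> q l" using assms(3) by force
  have "x i i (s i) = - level d r x s i" using assms(2,4) by (simp add: is_solution_iff_level)
  also have "\<dots> \<le> - level d r x u i" using level_mono[OF assms(1,3) sq assms(4)] by simp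
  finally show ?thesis using first_hit_le[OF assms(1) uq assms(4)] sq assms(4) by blast
qed

lemma first_hit_descends:
  assumes "in_S d x q" "is_solution d r x q s" "\<forall>l\<in>{1..d}. u l \<le> s l"
    and "\<forall>l\<in>{1..d}. first_hit d r x u l \<le> u l" "i \<in> {1..d}"
  shows "first_hit d r x (first_hit d r x u) i \<le> first_hit d r x u i"
proof -
  let ?v = "first_hit d r x u"
  have sq: "\<forall>l\<in>{1..d}. s l \<le> q l" using assms(2) by (simp add: is_solution_def)
  have uq: "\<forall>l\<in>{1..d}. u l \<le> q l" using assms(3) sq by force
  have vq: "\<forall>l\<in>{1..d}. ?v l \<le> q l" using assms(4) uq by force
  have "x i i (?v i) = - level d r x u i"
    using first_hit_below_solution[OF assms(1-3,5)] by blast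
  also have "\<dots> \<le> - level d r x ?v i" using level_mono[OF assms(1,4) uq assms(5)] by simp
  finally show ?thesis using first_hit_le[OF assms(1) vq assms(5)] vq assms(5) by blast
qed

lemma exists_first_hit_fixpoint:
  assumes "in_S d x q" "is_solution d r x q s"
  obtains u where "\<forall>i\<in>{1..d}. u i \<le> s i" "\<forall>i\<in>{1..d}. first_hit d r x u i = u i"
proof -
  define P where
    "P u \<longleftrightarrow> (\<forall>i\<in>{1..d}. u i \<le> s i) \<and> (\<forall>i\<in>{1..d}. first_hit d r x u i \<le> u i)" for u
  have "P s" using first_hit_below_solution[OF assms] by (simp add: P_def)
  then obtain u where Pu: "P u" and least: "\<And>v. P v \<Longrightarrow> (\<Sum>i=1..d. u i) \<le> (\<Sum>i=1..d. v i)"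
    using ex_has_least_nat[of P s "\<lambda>v. \<Sum>i=1..d. v i"] by blast
  have "P (first_hit d r x u)"
    using Pu first_hit_descends[OF assms] unfolding P_def by (meson order_trans)
  then have "\<not> (\<Sum>i=1..d. first_hit d r x u i) < (\<Sum>i=1..d. u i)"
    using least by (simp add: not_less)
  then have "\<forall>i\<in>{1..d}. first_hit d r x u i = u i"
    using Pu unfolding P_def by (metis finite_atLeastAtMost le_neq_implies_less sum_strict_mono_ex1)
  then show ?thesis using Pu that unfolding P_def by blast
qed

lemma exists_first_hitting_solution:
  assumes "in_S d x q" "is_solution d r x q s"
  obtains a where "\<forall>i\<in>{1..d}. tau x i (a i) \<le> s i"
    and "is_solution d r x q (\<lambda>i. tau x i (a i))"
    and "\<forall>i\<in>{1..d}. x i i (tau x i (a i)) = - int (a i)"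
proof -
  obtain u where us: "\<forall>i\<in>{1..d}. u i \<le> s i" and fixed: "\<forall>i\<in>{1..d}. first_hit d r x u i = u i"
    using exists_first_hit_fixpoint[OF assms] .
  define a where "a i = nat (level d r x u i)" for i
  have tau_a: "\<forall>i\<in>{1..d}. tau x i (a i) = u i" using fixed by (simp add: first_hit_def a_def)
  have sq: "\<forall>l\<in>{1..d}. s l \<le> q l" using assms(2) by (simp add: is_solution_def)
  have uq: "\<forall>l\<in>{1..d}. u l \<le> q l" using us sq by force
  have hits: "\<forall>i\<in>{1..d}. x i i (u i) = - level d r x u i"
    using first_hit_below_solution[OF assms us] fixed by metis
  then have "is_solution d r x q u" using uq by (simp add: is_solution_iff_level)
  moreover have "\<forall>i\<in>{1..d}. x i i (u i) = - int (a i)"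
    using hits level_nonneg[OF assms(1) uq] by (simp add: a_def)
  ultimately show ?thesis
    using that[of a] us tau_a is_solution_cong[of d "\<lambda>i. tau x i (a i)" u] by simp
qed

lemma diag_ge_neg_kvec: "m \<le> q i \<Longrightarrow> - x i i m \<le> int (kvec x q i)"
proof -
  assume "m \<le> q i"
  then have "Min {x i i m | m. m \<le> q i} \<le> x i i m"
    by (intro Min_le) (auto simp: setcompr_eq_image)
  then show ?thesis unfolding kvec_def by linarith
qed

lemma kvec_eq_first_hit:
  assumes "in_S d x q" "i \<in> {1..d}" "q i = tau x i a" "x i i (q i) = - int a"
  shows "kvec x q i = a"
proof -
  have "Min {x i i m | m. m \<le> q i} = - int a"
  proof (rule Min_eqI)
    show "finite {x i i m | m. m \<le> q i}" by (auto simp: setcompr_eq_image)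
    show "- int a \<in> {x i i m | m. m \<le> q i}" using assms(4) by force
    fix y assume "y \<in> {x i i m | m. m \<le> q i}"
    then obtain m where m: "m \<le> q i" "y = x i i m" by blast
    show "- int a \<le> y"
    proof (rule ccontr)
      assume "\<not> - int a \<le> y"
      then have "q i \<le> m" using tau_le[OF assms(1,2) m(1)] assms(3) m(2) by simp
      then show False using \<open>\<not> - int a \<le> y\<close> assms(4) m by simp
    qed
  qed
  then show ?thesis unfolding kvec_def by simp
qed

lemma tau_le_of_le_kvec:
  assumes "in_S d x q" "i \<in> {1..d}" "a \<le> kvec x q i"
  shows "tau x i a \<le> q i \<and> x i i (tau x i a) = - int a"
proof -
  let ?M = "{x i i m | m. m \<le> q i}"
  have "Min ?M \<in> ?M" by (intro Min_in) (auto simp: setcompr_eq_image)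
  then obtain m where m: "m \<le> q i" "x i i m = Min ?M" by auto
  have "x i i 0 = 0" using assms(1,2) by (simp add: in_S_def)
  moreover have "Min ?M \<le> x i i 0" by (intro Min_le) (auto simp: setcompr_eq_image)
  ultimately have "int (kvec x q i) = - Min ?M" unfolding kvec_def by simp
  then have below: "x i i m \<le> - int a" using assms(3) m(2) by simp
  then obtain m' where "x i i m' = - int a" using in_S_diag_attains[OF assms(1,2) m(1)] by blast
  then show ?thesis using tau_le[OF assms(1,2) m(1) below] diag_at_tau m(1) by simp
qed

lemma solution_of_xbar_solution:
  assumes "in_S d x q" "is_solution d r (xbar x) (kvec x q) a"
  shows "is_solution d r x q (\<lambda>i. tau x i (a i))"
  using assms tau_le_of_le_kvec[OF assms(1)] by (simp add: is_solution_def xbar_def)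

lemma xbar_solution_of_solution:
  assumes "is_solution d r x q (\<lambda>i. tau x i (a i))"
    and "\<forall>i\<in>{1..d}. x i i (tau x i (a i)) = - int (a i)"
  shows "is_solution d r (xbar x) (kvec x q) a"
proof -
  have "a i \<le> kvec x q i" if i: "i \<in> {1..d}" for i
  proof -
    have "tau x i (a i) \<le> q i" using assms(1) i by (simp add: is_solution_def)
    then show ?thesis using diag_ge_neg_kvec[of "tau x i (a i)" q i x] assms(2) i by simp
  qed
  then show ?thesis using assms(1) by (simp add: is_solution_def xbar_def)
qed

lemma smallest_solution_xbar:
  assumes S: "in_S d x n" and small: "smallest_solution d r x n n"
  shows "smallest_solution d r (xbar x) (kvec x n) (kvec x n)"
proof -
  have sol: "is_solution d r x n n" and least: "\<And>s. is_solution d r x n s \<Longrightarrow> \<forall>i\<in>{1..d}. n i \<le> s i"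
    using small by (auto simp: smallest_solution_def)
  obtain a where below: "\<forall>i\<in>{1..d}. tau x i (a i) \<le> n i"
    and sol_a: "is_solution d r x n (\<lambda>i. tau x i (a i))"
    and hits: "\<forall>i\<in>{1..d}. x i i (tau x i (a i)) = - int (a i)"
    using exists_first_hitting_solution[OF S sol] .
  have n_tau: "n i = tau x i (a i)" if "i \<in> {1..d}" for i
    using below least[OF sol_a] that by (simp add: le_antisym)
  have k_a: "\<forall>i\<in>{1..d}. kvec x n i = a i"
    using kvec_eq_first_hit[OF S] n_tau hits by simp
  have "is_solution d r (xbar x) (kvec x n) (kvec x n)"
    using xbar_solution_of_solution[OF sol_a hits] is_solution_cong[OF k_a] by blast
  moreover have "kvec x n i \<le> b i"
    if b: "is_solution d r (xbar x) (kvec x n) b" and i: "i \<in> {1..d}" for b i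
  proof -
    have "b i \<le> kvec x n i" using b i by (simp add: is_solution_def)
    then have "tau x i (b i) \<le> n i" and "x i i (tau x i (b i)) = - int (b i)"
      using tau_le_of_le_kvec[OF S i] by auto
    moreover have "n i \<le> tau x i (b i)" using least[OF solution_of_xbar_solution[OF S b]] i by blast
    ultimately have "x i i (n i) = - int (b i)" by (simp add: le_antisym)
    then show ?thesis using hits n_tau k_a i by simp
  qed
  ultimately show ?thesis by (simp add: smallest_solution_def)
qed

lemma smallest_solution_of_xbar:
  assumes S: "in_S d x n" and n_tau: "\<forall>i\<in>{1..d}. n i = tau x i (kvec x n i)"
    and small: "smallest_solution d r (xbar x) (kvec x n) (kvec x n)"
  shows "smallest_solution d r x n n"
proof -
  have sol_k: "is_solution d r (xbar x) (kvec x n) (kvec x n)"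
    and least: "\<And>b. is_solution d r (xbar x) (kvec x n) b \<Longrightarrow> \<forall>i\<in>{1..d}. kvec x n i \<le> b i"
    using small by (auto simp: smallest_solution_def)
  have "is_solution d r x n n"
    using solution_of_xbar_solution[OF S sol_k] is_solution_cong[OF n_tau] by blast
  moreover have "n i \<le> s i" if s: "is_solution d r x n s" and i: "i \<in> {1..d}" for s i
  proof -
    obtain a where below: "\<forall>i\<in>{1..d}. tau x i (a i) \<le> s i"
      and sol_a: "is_solution d r x n (\<lambda>i. tau x i (a i))"
      and hits: "\<forall>i\<in>{1..d}. x i i (tau x i (a i)) = - int (a i)"
      using exists_first_hitting_solution[OF S s] .
    have "kvec x n i \<le> a i" using least[OF xbar_solution_of_solution[OF sol_a hits]] i by blast
    then have "x i i (tau x i (a i)) \<le> - int (kvec x n i)" using hits i by simp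
    moreover have "tau x i (a i) \<le> n i" using sol_a i by (simp add: is_solution_def)
    ultimately have "tau x i (kvec x n i) \<le> tau x i (a i)" using tau_le[OF S i] by blast
    also have "\<dots> \<le> s i" using below i by blast
    finally show ?thesis using n_tau i by simp
  qed
  ultimately show ?thesis by (simp add: smallest_solution_def)
qed

theorem lemma2p6:
  fixes d :: nat and r :: "nat \<Rightarrow> nat" and x :: "nat \<Rightarrow> nat \<Rightarrow> nat \<Rightarrow> int"
    and n :: "nat \<Rightarrow> nat"
  assumes "d \<ge> 2"
    and "\<exists>j\<in>{1..d}. r j > 0"
    and "in_S d x n"
    and "\<forall>i\<in>{1..d}. n i \<ge> 1"
  shows "(smallest_solution d r x n n \<longrightarrow>
            smallest_solution d r (xbar x) (kvec x n) (kvec x n))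
       \<and> ((\<forall>i\<in>{1..d}. n i = tau x i (kvec x n i))
            \<and> smallest_solution d r (xbar x) (kvec x n) (kvec x n)
            \<longrightarrow> smallest_solution d r x n n)"
  using smallest_solution_xbar[OF assms(3)] smallest_solution_of_xbar[OF assms(3)] by blast

end
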